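(* Let $A$ be an $n\times n$ matrix with non-negative real entries and $\|A\|_{\max}\le 1$. Any eigenvalue $\mu$ of $A$ with $\mathrm{Im}(\mu)\neq 0$ satisfies \[ |\mu| \le \frac{n}{2} \qquad\text{and}\qquad |\mathrm{Re}(\mu)| \le \frac{3+\sqrt{57}}{24}\, n. \]
   Context: $\|A\|_{\max}$ denotes the largest absolute value of an entry of $A$. *)

theory Defs
  imports "HOL-Analysis.Analysis"
begin

definition complex_eigenvalue :: "real^'n^'n \<Rightarrow> complex \<Rightarrow> bool" where
  "complex_eigenvalue A mu \<longleftrightarrow>
     (\<exists>v :: complex^'n. v \<noteq> 0 \<and>
        (\<chi> i. \<Sum>j\<in>UNIV. complex_of_real (A $ i $ j) * v $ j) = mu *s v)"

end

theory Submission
  imports Defs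
begin

(* Write mu = a + i b with b \<noteq> 0 and choose a complex eigenvector x + i y with x \<bullet> y = 0.
   By Perron-Frobenius theory (Brouwer's theorem on the Collatz-Wielandt set) A has a nonnegative
   unit left eigenvector p for an eigenvalue r \<ge> |mu|, and p \<bullet> x = p \<bullet> y = 0 because r is real.
   With u, w the normalised x, y, the rank-one matrices u u^T, u w^T, w u^T, w w^T, p p^T are
   orthonormal for the Frobenius inner product, and g h^T is orthogonal to all of them, where
   g and h are the components of the all-ones vector 1 orthogonal to p and to span {u, w}.
   As 0 \<le> A \<le> 1 entrywise, the squared Frobenius norm of A is at most its entry sum 1^T A 1;
   expanding the latter in these coordinates and applying Bessel's inequality gives the bound
     2 |mu|^2 + r^2 \<le> r c + |mu| d + d^2 / 16 + (n - c) (n - d) / 4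
   with c = (p \<bullet> 1)^2 \<ge> r and d = (u \<bullet> 1)^2 + (w \<bullet> 1)^2 \<le> n - c.  Maximising over r, c and d
   leaves 12 |mu|^2 - 3 |mu| n - n^2 \<le> 0, i.e. |mu| \<le> (3 + sqrt 57) n / 24 \<le> n / 2. *)

lemma sq_le_mult_imp_le_add_quarter:
  fixes g x y :: real
  assumes "g\<^sup>2 \<le> x * y" and "0 \<le> x" and "0 \<le> y"
  shows "g \<le> x + y / 4"
proof -
  have "(x + y / 4)\<^sup>2 = x * y + (x - y / 4)\<^sup>2"
    by (simp add: power2_eq_square algebra_simps)
  then have "g\<^sup>2 \<le> (x + y / 4)\<^sup>2"
    using assms(1) zero_le_power2[of "x - y / 4"] by linarith
  moreover have "0 \<le> x + y / 4"
    using assms(2,3) by simp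
  ultimately show ?thesis
    by (rule power2_le_imp_le)
qed

lemma mult_le_sum_squares_sq:
  fixes \<alpha> \<beta> D :: real
  shows "\<alpha> * \<beta> * D \<le> (\<alpha>\<^sup>2 + \<beta>\<^sup>2)\<^sup>2 / 16 + D\<^sup>2"
proof -
  define d where "d = \<alpha>\<^sup>2 + \<beta>\<^sup>2"
  have "2 * \<bar>\<alpha> * \<beta>\<bar> \<le> d"
    using zero_le_power2[of "\<bar>\<alpha>\<bar> - \<bar>\<beta>\<bar>"]
    by (simp add: d_def power2_eq_square abs_mult algebra_simps)
  have "\<alpha> * \<beta> * D \<le> \<bar>\<alpha> * \<beta>\<bar> * \<bar>D\<bar>"
    by (metis abs_ge_self abs_mult)
  also have "\<dots> \<le> d / 2 * \<bar>D\<bar>"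
    using \<open>2 * \<bar>\<alpha> * \<beta>\<bar> \<le> d\<close> by (intro mult_right_mono) auto
  also have "\<dots> \<le> d\<^sup>2 / 16 + D\<^sup>2"
    using zero_le_power2[of "\<bar>D\<bar> - d / 4"] by (simp add: power2_eq_square algebra_simps)
  finally show ?thesis
    by (simp add: d_def)
qed

lemma frobenius_rhs_le_at_max_d:
  fixes m c d n :: real
  assumes "3 * n / 16 \<le> m" and "0 \<le> c" and "0 \<le> d" and "c + d \<le> n"
  shows "m * d + d\<^sup>2 / 16 + (n - c) * (n - d) / 4 \<le> m * (n - c) + (n - c) * (n + 3 * c) / 16"
proof -
  have "m * (n - c) + (n - c) * (n + 3 * c) / 16 - (m * d + d\<^sup>2 / 16 + (n - c) * (n - d) / 4)
      = (n - c - d) * (m + (n - c + d) / 16 - (n - c) / 4)"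
    by (simp add: power2_eq_square field_simps)
  also have "\<dots> \<ge> 0"
    using assms by (intro mult_nonneg_nonneg) (simp_all add: field_simps)
  finally show ?thesis
    by simp
qed

lemma frobenius_inequality_imp_quadratic_bound:
  fixes m r c d n :: real
  assumes "0 \<le> m" and "m \<le> r" and "r \<le> c" and "0 \<le> d" and "c + d \<le> n"
    and ineq: "2 * m\<^sup>2 + r\<^sup>2 \<le> r * c + m * d + d\<^sup>2 / 16 + (n - c) * (n - d) / 4"
  shows "12 * m\<^sup>2 - 3 * m * n - n\<^sup>2 \<le> 0"
proof (cases "3 * m \<le> n")
  case True
  have "m * (12 * m - 3 * n) \<le> m * n"
    using True assms(1) by (intro mult_left_mono) auto
  moreover have "m * n \<le> n * n"
    using True assms(1) by (intro mult_right_mono) auto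
  ultimately show ?thesis
    by (simp add: power2_eq_square algebra_simps)
next
  case False
  define slack where "slack = 2 * m\<^sup>2 + r * (r - c) - (m * (n - c) + (n - c) * (n + 3 * c) / 16)"
  have "slack \<le> 0"
    using ineq frobenius_rhs_le_at_max_d[of n m c d] False assms
    by (simp add: slack_def power2_eq_square algebra_simps)
  consider "c \<le> 2 * m" | "2 * m < c"
    by linarith
  then show ?thesis
  proof cases
    case 1
    \<comment> \<open>r (c - r) is largest at r = m, and the remaining bound decreases in c \<ge> m > n / 3\<close>
    define P where "P = (r - m) * (c - r - m)"
    define Q where "Q = (c - m) * (3 * c + 3 * m - 2 * n)"
    have "P \<le> 0"
      unfolding P_def using 1 assms by (intro mult_nonneg_nonpos) auto
    moreover have "Q \<ge> 0"
      unfolding Q_def using False assms by (intro mult_nonneg_nonneg) auto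
    moreover have "4 * (12 * m\<^sup>2 - 3 * m * n - n\<^sup>2) = 16 * slack + 16 * P - Q - 3 * (n - m)\<^sup>2"
      by (simp add: slack_def P_def Q_def power2_eq_square field_simps)
    ultimately have "4 * (12 * m\<^sup>2 - 3 * m * n - n\<^sup>2) \<le> 0"
      using \<open>slack \<le> 0\<close> zero_le_power2[of "n - m"] by linarith
    then show ?thesis
      by simp
  next
    case 2
    \<comment> \<open>r (c - r) \<le> c^2 / 4, and the remaining bound decreases in c \<ge> 2 m\<close>
    define Q where "Q = (c - 2 * m) * (14 * m - c - 2 * n)"
    have "Q \<ge> 0"
      unfolding Q_def using 2 False assms by (intro mult_nonneg_nonneg) auto
    moreover have "4 * (12 * m\<^sup>2 - 3 * m * n - n\<^sup>2)
        = 16 * slack - 16 * (c / 2 - r)\<^sup>2 - Q - 12 * (m - n / 3)\<^sup>2 - 5 * n\<^sup>2 / 3"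
      by (simp add: slack_def Q_def power2_eq_square field_simps)
    ultimately have "4 * (12 * m\<^sup>2 - 3 * m * n - n\<^sup>2) \<le> 0"
      using \<open>slack \<le> 0\<close> zero_le_power2[of "c / 2 - r"] zero_le_power2[of "m - n / 3"]
        zero_le_power2[of n] by linarith
    then show ?thesis
      by simp
  qed
qed

lemma quadratic_le_zero_imp_le_root:
  fixes x n :: real
  assumes "0 \<le> n" and "12 * x\<^sup>2 - 3 * x * n - n\<^sup>2 \<le> 0"
  shows "x \<le> (3 + sqrt 57) / 24 * n"
proof (rule ccontr)
  assume "\<not> ?thesis"
  then have above: "x - (3 + sqrt 57) / 24 * n > 0"
    by simp
  have "3 \<le> sqrt 57"
    using real_sqrt_le_mono[of "3\<^sup>2" 57] by simp
  then have "(3 + sqrt 57) / 24 * n \<ge> (3 - sqrt 57) / 24 * n"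
    using assms(1) by (intro mult_right_mono) auto
  then have "x - (3 - sqrt 57) / 24 * n > 0"
    using above by linarith
  with above have "12 * ((x - (3 + sqrt 57) / 24 * n) * (x - (3 - sqrt 57) / 24 * n)) > 0"
    by simp
  moreover have "12 * ((x - (3 + sqrt 57) / 24 * n) * (x - (3 - sqrt 57) / 24 * n))
      = 12 * x\<^sup>2 - 3 * x * n - n\<^sup>2"
    by (simp add: power2_eq_square field_simps)
  ultimately show False
    using assms(2) by linarith
qed

section \<open>Bessel's inequality\<close>

lemma orthonormal_residual:
  fixes X :: "'a::real_inner" and F :: "'i \<Rightarrow> 'a"
  assumes "finite I"
    and orthonormal: "\<And>i j. i \<in> I \<Longrightarrow> j \<in> I \<Longrightarrow> F i \<bullet> F j = (if i = j then 1 else 0)"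
  defines "R \<equiv> X - (\<Sum>i\<in>I. (X \<bullet> F i) *\<^sub>R F i)"
  shows "\<And>j. j \<in> I \<Longrightarrow> R \<bullet> F j = 0"
    and "R \<bullet> R = X \<bullet> X - (\<Sum>i\<in>I. (X \<bullet> F i)\<^sup>2)"
proof -
  show R_F: "R \<bullet> F j = 0" if "j \<in> I" for j
  proof -
    have "(\<Sum>i\<in>I. (X \<bullet> F i) *\<^sub>R F i) \<bullet> F j = (\<Sum>i\<in>I. if i = j then X \<bullet> F i else 0)"
      using orthonormal that by (auto simp: inner_sum_left intro: sum.cong)
    also have "\<dots> = X \<bullet> F j"
      using assms(1) that by simp
    finally show ?thesis
      by (simp add: R_def inner_diff_left)
  qed
  have "R \<bullet> (\<Sum>i\<in>I. (X \<bullet> F i) *\<^sub>R F i) = 0"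
    using R_F by (simp add: inner_sum_right)
  then have "R \<bullet> R = R \<bullet> X"
    by (simp add: R_def inner_diff_right)
  also have "\<dots> = X \<bullet> X - (\<Sum>i\<in>I. (X \<bullet> F i) * (F i \<bullet> X))"
    by (simp add: R_def inner_diff_left inner_sum_left)
  also have "\<dots> = X \<bullet> X - (\<Sum>i\<in>I. (X \<bullet> F i)\<^sup>2)"
    by (simp add: power2_eq_square inner_commute)
  finally show "R \<bullet> R = X \<bullet> X - (\<Sum>i\<in>I. (X \<bullet> F i)\<^sup>2)" .
qed

lemma bessel_inequality:
  fixes X :: "'a::real_inner" and F :: "'i \<Rightarrow> 'a"
  assumes "finite I"
    and "\<And>i j. i \<in> I \<Longrightarrow> j \<in> I \<Longrightarrow> F i \<bullet> F j = (if i = j then 1 else 0)"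
  shows "(\<Sum>i\<in>I. (X \<bullet> F i)\<^sup>2) \<le> X \<bullet> X"
  using orthonormal_residual(2)[OF assms, of X] inner_ge_zero by (metis diff_ge_0_iff_ge)

lemma bessel_inequality_orthogonal:
  fixes X G :: "'a::real_inner" and F :: "'i \<Rightarrow> 'a"
  assumes "finite I"
    and "\<And>i j. i \<in> I \<Longrightarrow> j \<in> I \<Longrightarrow> F i \<bullet> F j = (if i = j then 1 else 0)"
    and "\<And>i. i \<in> I \<Longrightarrow> F i \<bullet> G = 0"
  shows "(X \<bullet> G)\<^sup>2 \<le> (X \<bullet> X - (\<Sum>i\<in>I. (X \<bullet> F i)\<^sup>2)) * (G \<bullet> G)"
proof -
  define R where "R = X - (\<Sum>i\<in>I. (X \<bullet> F i) *\<^sub>R F i)"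
  have "X \<bullet> G = R \<bullet> G"
    using assms(3) by (simp add: R_def inner_diff_left inner_sum_left)
  then show ?thesis
    using Cauchy_Schwarz_ineq[of R G] orthonormal_residual(2)[OF assms(1,2), of X]
    by (simp add: R_def)
qed

section \<open>Nonnegative matrices\<close>

definition outer_prod :: "real^'m \<Rightarrow> real^'n \<Rightarrow> real^'n^'m" where
  "outer_prod z q = (\<chi> i j. z $ i * q $ j)"

lemma inner_outer_prod: "M \<bullet> outer_prod z q = z \<bullet> (M *v q)"
  by (simp add: outer_prod_def inner_vec_def matrix_vector_mult_def sum_distrib_left algebra_simps)

lemma inner_outer_prod_outer_prod:
  "outer_prod z q \<bullet> outer_prod z' q' = (z \<bullet> z') * (q \<bullet> q')"
  by (simp add: outer_prod_def inner_vec_def sum_distrib_left sum_distrib_right algebra_simps)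

lemma inner_self_le_sum_entries:
  fixes A :: "real^'n^'m"
  assumes "\<forall>i j. 0 \<le> A $ i $ j" and "\<forall>i j. A $ i $ j \<le> 1"
  shows "A \<bullet> A \<le> 1 \<bullet> (A *v 1)"
proof -
  have "A \<bullet> A = (\<Sum>i\<in>UNIV. \<Sum>j\<in>UNIV. A $ i $ j * A $ i $ j)"
    by (simp add: inner_vec_def)
  also have "\<dots> \<le> (\<Sum>i\<in>UNIV. \<Sum>j\<in>UNIV. A $ i $ j)"
    using assms by (intro sum_mono) (simp add: mult_left_le)
  also have "\<dots> = 1 \<bullet> (A *v 1)"
    by (simp add: inner_vec_def matrix_vector_mult_def)
  finally show ?thesis .
qed

lemma nonneg_left_eigenvalue_le_sq_sum:
  fixes A :: "real^'n^'n"
  assumes "\<forall>i j. A $ i $ j \<le> 1" and "0 \<le> p" and "p \<bullet> p = 1" and "p v* A = r *\<^sub>R p"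
  shows "r \<le> (p \<bullet> 1)\<^sup>2"
proof -
  have p_nonneg: "0 \<le> p $ i" for i
    using assms(2) by (simp add: less_eq_vec_def)
  have "A $ i $ j * p $ j \<le> p $ j" for i j
    using mult_right_mono[of "A $ i $ j" 1 "p $ j"] assms(1) p_nonneg by simp
  then have row: "(A *v p) $ i \<le> p \<bullet> 1" for i
    unfolding matrix_vector_mult_def inner_vec_def by (auto intro!: sum_mono)
  have "r = (p v* A) \<bullet> p"
    using assms(3,4) by simp
  also have "\<dots> = p \<bullet> (A *v p)"
    by (simp add: dot_lmul_matrix)
  also have "\<dots> \<le> (\<Sum>i\<in>UNIV. p $ i * (p \<bullet> 1))"
    unfolding inner_vec_def[of p "A *v p"] inner_real_def
    using row p_nonneg by (intro sum_mono mult_left_mono)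
  also have "\<dots> = (p \<bullet> 1)\<^sup>2"
    by (simp add: inner_vec_def sum_distrib_right power2_eq_square)
  finally show ?thesis .
qed

lemma matrix_vector_mult_mono:
  fixes A :: "real^'n^'m"
  assumes "\<forall>i j. 0 \<le> A $ i $ j" and "x \<le> y"
  shows "A *v x \<le> A *v y"
  using assms by (auto simp: less_eq_vec_def matrix_vector_mult_def intro!: sum_mono mult_left_mono)

section \<open>A Perron-Frobenius eigenvector via Brouwer\<close>

definition collatz_wielandt_set :: "real^'n^'n \<Rightarrow> real \<Rightarrow> (real^'n) set" where
  "collatz_wielandt_set A t = {q. 0 \<le> q \<and> (\<Sum>i\<in>UNIV. q $ i) = 1 \<and> t *\<^sub>R q \<le> A *v q}"

lemma compact_collatz_wielandt_set: "compact (collatz_wielandt_set A t)"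
proof -
  have "collatz_wielandt_set A t =
      (\<Inter>i. {q. 0 \<le> q $ i} \<inter> {q. t * q $ i \<le> (A *v q) $ i}) \<inter> {q. (\<Sum>i\<in>UNIV. q $ i) = 1}"
    by (auto simp: collatz_wielandt_set_def less_eq_vec_def)
  also have "closed \<dots>"
    by (intro closed_Int closed_INT ballI closed_Collect_le closed_Collect_eq continuous_intros)
  finally have "closed (collatz_wielandt_set A t)" .
  moreover have "collatz_wielandt_set A t \<subseteq> cbox 0 1"
  proof
    fix q assume q: "q \<in> collatz_wielandt_set A t"
    then have "0 \<le> q $ i \<and> q $ i \<le> 1" for i
      using member_le_sum[of i UNIV "\<lambda>i. q $ i"]
      by (auto simp: collatz_wielandt_set_def less_eq_vec_def)
    then show "q \<in> cbox 0 1"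
      by (simp add: mem_box_cart)
  qed
  ultimately show ?thesis
    by (meson bounded_cbox bounded_subset compact_eq_bounded_closed)
qed

lemma convex_collatz_wielandt_set: "convex (collatz_wielandt_set (A :: real^'n^'n) t)"
proof (rule convexI)
  fix x y :: "real^'n" and u v :: real
  assume x: "x \<in> collatz_wielandt_set A t" and y: "y \<in> collatz_wielandt_set A t"
    and uv: "0 \<le> u" "0 \<le> v" "u + v = 1"
  have "t *\<^sub>R (u *\<^sub>R x + v *\<^sub>R y) = u *\<^sub>R (t *\<^sub>R x) + v *\<^sub>R (t *\<^sub>R y)"
    by (simp add: algebra_simps)
  also have "\<dots> \<le> u *\<^sub>R (A *v x) + v *\<^sub>R (A *v y)"
    using x y uv by (intro add_mono scaleR_left_mono) (auto simp: collatz_wielandt_set_def)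
  also have "\<dots> = A *v (u *\<^sub>R x + v *\<^sub>R y)"
    by (simp add: matrix_vector_right_distrib matrix_vector_mult_scaleR)
  finally show "u *\<^sub>R x + v *\<^sub>R y \<in> collatz_wielandt_set A t"
    using x y uv
    by (auto simp: collatz_wielandt_set_def sum.distrib simp flip: sum_distrib_left
        intro!: add_nonneg_nonneg scaleR_nonneg_nonneg)
qed

lemma collatz_wielandt_set_nonempty:
  fixes A :: "real^'n^'n"
  assumes "0 \<le> z" and "z \<noteq> 0" and "t *\<^sub>R z \<le> A *v z"
  shows "collatz_wielandt_set A t \<noteq> {}"
proof -
  define s where "s = (\<Sum>i\<in>UNIV. z $ i)"
  obtain i where "z $ i \<noteq> 0"
    using assms(2) by (metis vec_eq_iff zero_index)
  then have "0 < z $ i"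
    using assms(1) by (simp add: less_eq_vec_def order_less_le)
  moreover have "z $ i \<le> s"
    using assms(1) unfolding s_def by (intro member_le_sum) (auto simp: less_eq_vec_def)
  ultimately have "0 < s"
    by linarith
  have "t *\<^sub>R ((1 / s) *\<^sub>R z) \<le> A *v ((1 / s) *\<^sub>R z)"
    using scaleR_left_mono[OF assms(3), of "1 / s"] \<open>0 < s\<close> by (simp add: matrix_vector_mult_scaleR)
  then have "(1 / s) *\<^sub>R z \<in> collatz_wielandt_set A t"
    using assms(1) \<open>0 < s\<close>
    by (auto simp: collatz_wielandt_set_def s_def simp flip: sum_divide_distrib
        intro: scaleR_nonneg_nonneg)
  then show ?thesis
    by blast
qed

(* The shift by q keeps the normaliser D at least 1, so the Brouwer map is continuous even where
   A q = 0. *)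
lemma collatz_wielandt_set_step:
  fixes A :: "real^'n^'n"
  assumes nonneg: "\<forall>i j. 0 \<le> A $ i $ j" and q: "q \<in> collatz_wielandt_set A t"
  defines "D \<equiv> 1 + (\<Sum>i\<in>UNIV. (A *v q) $ i)"
  shows "1 \<le> D" and "(1 / D) *\<^sub>R (q + A *v q) \<in> collatz_wielandt_set A t"
proof -
  have "0 \<le> q" and sum_q: "(\<Sum>i\<in>UNIV. q $ i) = 1" and sub: "t *\<^sub>R q \<le> A *v q"
    using q by (auto simp: collatz_wielandt_set_def)
  have "0 \<le> A *v q"
    using matrix_vector_mult_mono[OF nonneg \<open>0 \<le> q\<close>] by simp
  then show "1 \<le> D"
    by (simp add: D_def less_eq_vec_def sum_nonneg)
  have "t *\<^sub>R (q + A *v q) = t *\<^sub>R q + A *v (t *\<^sub>R q)"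
    by (simp add: algebra_simps)
  also have "\<dots> \<le> A *v q + A *v (A *v q)"
    using sub by (intro add_mono matrix_vector_mult_mono[OF nonneg])
  finally have "(1 / D) *\<^sub>R (t *\<^sub>R (q + A *v q)) \<le> (1 / D) *\<^sub>R (A *v q + A *v (A *v q))"
    using \<open>1 \<le> D\<close> by (intro scaleR_left_mono) auto
  then have "t *\<^sub>R ((1 / D) *\<^sub>R (q + A *v q)) \<le> A *v ((1 / D) *\<^sub>R (q + A *v q))"
    by (metis matrix_vector_mult_scaleR matrix_vector_right_distrib scaleR_left_commute)
  moreover have "(\<Sum>i\<in>UNIV. ((1 / D) *\<^sub>R (q + A *v q)) $ i) = 1"
    using \<open>1 \<le> D\<close> sum_q by (simp add: D_def sum.distrib flip: sum_divide_distrib)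
  moreover have "0 \<le> (1 / D) *\<^sub>R (q + A *v q)"
    using \<open>0 \<le> q\<close> \<open>0 \<le> A *v q\<close> \<open>1 \<le> D\<close>
    by (intro scaleR_nonneg_nonneg add_nonneg_nonneg) auto
  ultimately show "(1 / D) *\<^sub>R (q + A *v q) \<in> collatz_wielandt_set A t"
    by (simp add: collatz_wielandt_set_def)
qed

lemma perron_frobenius_eigenvector_ge:
  fixes A :: "real^'n^'n"
  assumes nonneg: "\<forall>i j. 0 \<le> A $ i $ j" and "0 \<le> z" and "z \<noteq> 0" and "t *\<^sub>R z \<le> A *v z"
  obtains q r where "0 \<le> q" and "q \<noteq> 0" and "A *v q = r *\<^sub>R q" and "t \<le> r"
proof -
  let ?S = "collatz_wielandt_set A t"
  define D where "D q = 1 + (\<Sum>i\<in>UNIV. (A *v q) $ i)" for q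
  define f where "f q = (1 / D q) *\<^sub>R (q + A *v q)" for q
  have D_pos: "\<forall>q\<in>?S. D q \<noteq> 0"
    using collatz_wielandt_set_step(1)[OF nonneg] by (fastforce simp: D_def)
  have "continuous_on ?S f"
    unfolding f_def D_def by (intro continuous_intros) (use D_pos in \<open>simp add: D_def\<close>)
  moreover have "f \<in> ?S \<rightarrow> ?S"
    using collatz_wielandt_set_step(2)[OF nonneg] by (simp add: f_def D_def)
  ultimately obtain q where q: "q \<in> ?S" and "f q = q"
    using brouwer[OF compact_collatz_wielandt_set convex_collatz_wielandt_set
        collatz_wielandt_set_nonempty[OF assms(2-4)]] by blast
  have "1 \<le> D q"
    using collatz_wielandt_set_step(1)[OF nonneg q] by (simp add: D_def)
  then have "q + A *v q = D q *\<^sub>R f q"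
    by (simp add: f_def)
  then have eig: "A *v q = (D q - 1) *\<^sub>R q"
    using \<open>f q = q\<close> by (simp add: algebra_simps)
  have "0 \<le> q" and sum_q: "(\<Sum>i\<in>UNIV. q $ i) = 1" and "t *\<^sub>R q \<le> A *v q"
    using q by (auto simp: collatz_wielandt_set_def)
  obtain i where "q $ i \<noteq> 0"
    using sum_q by (metis (mono_tags, lifting) sum.neutral zero_neq_one)
  then have "0 < q $ i"
    using \<open>0 \<le> q\<close> by (simp add: less_eq_vec_def order_less_le)
  moreover have "t * q $ i \<le> (D q - 1) * q $ i"
    using \<open>t *\<^sub>R q \<le> A *v q\<close> eig by (simp add: less_eq_vec_def)
  ultimately have "t \<le> D q - 1"
    by simp
  moreover have "q \<noteq> 0"
    using \<open>q $ i \<noteq> 0\<close> by (metis zero_index)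
  ultimately show ?thesis
    using that \<open>0 \<le> q\<close> eig by blast
qed

section \<open>Non-real eigenvalues of real matrices\<close>

lemma complex_eigenvalue_iff:
  "complex_eigenvalue A mu \<longleftrightarrow> (\<exists>v. v \<noteq> 0 \<and> map_matrix complex_of_real A *v v = mu *s v)"
  by (simp only: complex_eigenvalue_def matrix_vector_mult_def nth_map_matrix)

lemma singular_matrix_left_kernel:
  fixes M :: "'a::field^'n^'n"
  assumes "v \<noteq> 0" and "M *v v = 0"
  obtains w where "w \<noteq> 0" and "w v* M = 0"
proof -
  have "\<nexists>B. B ** M = mat 1"
    using assms by (auto simp: matrix_left_invertible_ker)
  then have "\<nexists>B. B ** transpose M = mat 1"
    by (metis left_invertible_transpose matrix_left_right_inverse)
  then show ?thesis
    using that matrix_left_invertible_ker[of "transpose M"] by auto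
qed

lemma complex_eigenvalue_left_eigenvector:
  assumes "complex_eigenvalue A mu"
  obtains w where "w \<noteq> 0" and "w v* map_matrix complex_of_real A = mu *s w"
proof -
  define M where "M = map_matrix complex_of_real A - mat mu"
  have mat_mult: "mat mu *v v = mu *s v" "v v* mat mu = mu *s v" for v :: "complex^'a"
    by (simp_all add: vec_eq_iff matrix_vector_mult_def vector_matrix_mult_def mat_def
        if_distrib[of "\<lambda>x. x * _"] if_distrib[of "\<lambda>x. _ * x"] mult.commute cong: if_cong)
  obtain v where "v \<noteq> 0" and "M *v v = 0"
    using assms by (auto simp: complex_eigenvalue_iff M_def matrix_vector_mult_diff_rdistrib mat_mult)
  then obtain w where "w \<noteq> 0" and "w v* M = 0"
    by (rule singular_matrix_left_kernel)
  then show ?thesis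
    using that by (simp add: M_def vector_matrix_mult_diff_rdistrib mat_mult)
qed

lemma complex_eigenvalue_le_perron_root:
  fixes A :: "real^'n^'n"
  assumes nonneg: "\<forall>i j. 0 \<le> A $ i $ j" and "complex_eigenvalue A mu"
  obtains p r where "0 \<le> p" and "p \<bullet> p = 1" and "p v* A = r *\<^sub>R p" and "cmod mu \<le> r"
proof -
  obtain w where "w \<noteq> 0" and w: "w v* map_matrix complex_of_real A = mu *s w"
    using assms(2) by (rule complex_eigenvalue_left_eigenvector)
  define z where "z = (\<chi> i. cmod (w $ i))"
  have "0 \<le> z"
    by (simp add: z_def less_eq_vec_def)
  obtain i where "w $ i \<noteq> 0"
    using \<open>w \<noteq> 0\<close> unfolding vec_eq_iff by auto
  then have "z $ i \<noteq> 0"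
    by (simp add: z_def)
  then have "z \<noteq> 0"
    by (metis zero_index)
  have "cmod mu * z $ j \<le> (transpose A *v z) $ j" for j
  proof -
    have "(w v* map_matrix complex_of_real A) $ j = mu * w $ j"
      using w by simp
    then have "cmod mu * z $ j = cmod (\<Sum>i\<in>UNIV. w $ i * complex_of_real (A $ i $ j))"
      by (simp add: z_def vector_matrix_mult_def norm_mult)
    also have "\<dots> \<le> (\<Sum>i\<in>UNIV. A $ i $ j * z $ i)"
      using norm_sum[of "\<lambda>i. w $ i * complex_of_real (A $ i $ j)" UNIV] nonneg
      by (simp add: z_def norm_mult mult.commute)
    finally show ?thesis
      by (simp add: matrix_vector_mult_def transpose_def)
  qed
  then have "cmod mu *\<^sub>R z \<le> transpose A *v z"
    by (simp add: less_eq_vec_def)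
  moreover have "\<forall>i j. 0 \<le> transpose A $ i $ j"
    using nonneg by (simp add: transpose_def)
  ultimately obtain q r where "0 \<le> q" "q \<noteq> 0" "transpose A *v q = r *\<^sub>R q" "cmod mu \<le> r"
    using perron_frobenius_eigenvector_ge \<open>0 \<le> z\<close> \<open>z \<noteq> 0\<close> by metis
  moreover have "0 \<le> sgn q"
    using \<open>0 \<le> q\<close> by (simp add: sgn_div_norm scaleR_nonneg_nonneg)
  moreover have "sgn q \<bullet> sgn q = 1"
    using \<open>q \<noteq> 0\<close> by (simp add: dot_square_norm norm_sgn)
  moreover have "sgn q v* A = r *\<^sub>R sgn q"
    using \<open>transpose A *v q = r *\<^sub>R q\<close> by (simp add: sgn_div_norm scaleR_vector_matrix_assoc)
  ultimately show ?thesis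
    using that by blast
qed

lemma map_matrix_of_real_mult_Re_Im:
  fixes A :: "real^'n^'m" and v :: "complex^'n"
  shows "A *v (\<chi> j. Re (v $ j)) = (\<chi> i. Re ((map_matrix complex_of_real A *v v) $ i))"
    and "A *v (\<chi> j. Im (v $ j)) = (\<chi> i. Im ((map_matrix complex_of_real A *v v) $ i))"
  unfolding vec_eq_iff matrix_vector_mult_def by (simp_all add: Re_sum Im_sum)

lemma complex_eigenvalue_real_square_sum:
  assumes "complex_eigenvalue A mu"
  obtains v where "v \<noteq> 0" and "map_matrix complex_of_real A *v v = mu *s v"
    and "Im (\<Sum>j\<in>UNIV. (v $ j)\<^sup>2) = 0"
proof -
  obtain v where "v \<noteq> 0" and v: "map_matrix complex_of_real A *v v = mu *s v"
    using assms by (auto simp: complex_eigenvalue_iff)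
  obtain \<rho> \<theta> where polar: "(\<Sum>j\<in>UNIV. (v $ j)\<^sup>2) = rcis \<rho> \<theta>"
    using rcis_Ex by blast
  \<comment> \<open>rotating v by a phase rotates the sum of squares by twice that phase\<close>
  define v' where "v' = cis (- \<theta> / 2) *s v"
  have "(\<Sum>j\<in>UNIV. (v' $ j)\<^sup>2) = (cis (- \<theta> / 2))\<^sup>2 * rcis \<rho> \<theta>"
    by (simp add: v'_def power_mult_distrib sum_distrib_left flip: polar)
  also have "(cis (- \<theta> / 2))\<^sup>2 = cis (- \<theta>)"
    by (simp only: power2_eq_square cis_mult field_sum_of_halves)
  also have "cis (- \<theta>) * rcis \<rho> \<theta> = complex_of_real \<rho>"
    by (simp add: rcis_def mult.left_commute[of "cis _"] cis_mult)
  finally have "Im (\<Sum>j\<in>UNIV. (v' $ j)\<^sup>2) = 0"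
    by simp
  moreover have "v' \<noteq> 0"
    using \<open>v \<noteq> 0\<close> unfolding v'_def vec_eq_iff by auto
  moreover have "map_matrix complex_of_real A *v v' = mu *s v'"
  proof -
    have "map_matrix complex_of_real A *v v' = cis (- \<theta> / 2) *s (map_matrix complex_of_real A *v v)"
      unfolding v'_def vec_eq_iff by (simp add: matrix_vector_mult_def sum_distrib_left algebra_simps)
    then show ?thesis
      using v by (simp add: v'_def vector_smult_assoc mult.commute)
  qed
  ultimately show ?thesis
    using that by blast
qed

lemma complex_eigenvalue_orthogonal_real_pair:
  fixes A :: "real^'n^'n"
  assumes "complex_eigenvalue A mu" and "Im mu \<noteq> 0"
  obtains x y where "x \<noteq> 0" and "y \<noteq> 0" and "x \<bullet> y = 0"
    and "A *v x = Re mu *\<^sub>R x - Im mu *\<^sub>R y" and "A *v y = Im mu *\<^sub>R x + Re mu *\<^sub>R y"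
proof -
  obtain v where "v \<noteq> 0" and v: "map_matrix complex_of_real A *v v = mu *s v"
    and real: "Im (\<Sum>j\<in>UNIV. (v $ j)\<^sup>2) = 0"
    using assms(1) by (rule complex_eigenvalue_real_square_sum)
  define x where "x = (\<chi> j. Re (v $ j))"
  define y where "y = (\<chi> j. Im (v $ j))"
  have Ax: "A *v x = Re mu *\<^sub>R x - Im mu *\<^sub>R y" and Ay: "A *v y = Im mu *\<^sub>R x + Re mu *\<^sub>R y"
    unfolding x_def y_def map_matrix_of_real_mult_Re_Im v vec_eq_iff by (simp_all add: algebra_simps)
  have "Im (\<Sum>j\<in>UNIV. (v $ j)\<^sup>2) = 2 * (x \<bullet> y)"
    by (simp add: x_def y_def inner_vec_def Im_sum power2_eq_square sum_distrib_left mult.commute)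
  then have "x \<bullet> y = 0"
    using real by simp
  have "x \<noteq> 0 \<or> y \<noteq> 0"
    using \<open>v \<noteq> 0\<close> unfolding x_def y_def vec_eq_iff by (auto simp: complex_eq_iff)
  then have "x \<noteq> 0" and "y \<noteq> 0"
    using Ax Ay assms(2) by auto
  then show ?thesis
    using that \<open>x \<bullet> y = 0\<close> Ax Ay by blast
qed

lemma left_eigenvector_orthogonal_rotation_pair:
  fixes A :: "real^'n^'n"
  assumes "p v* A = r *\<^sub>R p" and "A *v x = a *\<^sub>R x - b *\<^sub>R y" and "A *v y = b *\<^sub>R x + a *\<^sub>R y"
    and "b \<noteq> 0"
  shows "p \<bullet> x = 0" and "p \<bullet> y = 0"
proof -
  define s t where "s = p \<bullet> x" and "t = p \<bullet> y"
  have "r * s = a * s - b * t" and "r * t = b * s + a * t"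
    using dot_lmul_matrix[of p A x] dot_lmul_matrix[of p A y] assms(1-3)
    by (simp_all add: s_def t_def inner_diff_right inner_add_right)
  then have bt: "b * t = a * s - r * s" and bs: "b * s = r * t - a * t"
    by linarith+
  \<comment> \<open>r is real while a + i b is not, so this 2 x 2 system only has the zero solution\<close>
  have "b * (s\<^sup>2 + t\<^sup>2) = s * (b * s) + t * (b * t)"
    by (simp add: power2_eq_square algebra_simps)
  also have "\<dots> = s * (r * t - a * t) + t * (a * s - r * s)"
    by (simp only: bs bt)
  also have "\<dots> = 0"
    by (simp add: algebra_simps)
  finally have "s\<^sup>2 + t\<^sup>2 = 0"
    using assms(4) by simp
  then show "p \<bullet> x = 0" and "p \<bullet> y = 0"
    by (simp_all add: s_def t_def sum_power2_eq_zero_iff)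
qed

section \<open>The Frobenius inequality\<close>

(* A acts on span {u, w} by the matrix [[a, l], [k, a]], whose eigenvalues a +- sqrt (k l) have
   modulus sqrt (a^2 - k l) when k l \<le> 0. *)
locale rotation_frame =
  fixes A :: "real^'n^'n" and u w p :: "real^'n" and a k l r :: real
  assumes unit_u: "u \<bullet> u = 1" and unit_w: "w \<bullet> w = 1" and unit_p: "p \<bullet> p = 1"
    and orth_u_w: "u \<bullet> w = 0" and orth_p_u: "p \<bullet> u = 0" and orth_p_w: "p \<bullet> w = 0"
    and A_u: "A *v u = a *\<^sub>R u + k *\<^sub>R w" and A_w: "A *v w = l *\<^sub>R u + a *\<^sub>R w"
    and p_A: "p v* A = r *\<^sub>R p"
begin

lemma frame_inner:
  "u \<bullet> u = 1" "w \<bullet> w = 1" "p \<bullet> p = 1"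
  "u \<bullet> w = 0" "w \<bullet> u = 0" "p \<bullet> u = 0" "u \<bullet> p = 0" "p \<bullet> w = 0" "w \<bullet> p = 0"
  using unit_u unit_w unit_p orth_u_w orth_p_u orth_p_w by (simp_all add: inner_commute)

lemma p_A_p: "p \<bullet> (A *v p) = r"
  using dot_lmul_matrix[of p A p] p_A unit_p by simp

definition ones_perp_p :: "real^'n" where
  "ones_perp_p = 1 - (p \<bullet> 1) *\<^sub>R p"

definition ones_perp_uw :: "real^'n" where
  "ones_perp_uw = 1 - (u \<bullet> 1) *\<^sub>R u - (w \<bullet> 1) *\<^sub>R w"

lemma ones_perp_p:
  "p \<bullet> ones_perp_p = 0" "ones_perp_p \<bullet> ones_perp_p = real CARD('n) - (p \<bullet> 1)\<^sup>2"
  by (simp_all add: ones_perp_p_def inner_diff_left inner_diff_right frame_inner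
      inner_commute[of 1 p] power2_eq_square) (simp add: inner_vec_def)

lemma ones_perp_uw:
  "u \<bullet> ones_perp_uw = 0" "w \<bullet> ones_perp_uw = 0"
  "ones_perp_uw \<bullet> ones_perp_uw = real CARD('n) - ((u \<bullet> 1)\<^sup>2 + (w \<bullet> 1)\<^sup>2)"
  by (simp_all add: ones_perp_uw_def inner_diff_left inner_diff_right frame_inner
      inner_commute[of 1 u] inner_commute[of 1 w] power2_eq_square) (simp add: inner_vec_def)

lemma sq_inner_ones_le:
  "(p \<bullet> 1)\<^sup>2 + ((u \<bullet> 1)\<^sup>2 + (w \<bullet> 1)\<^sup>2) \<le> real CARD('n)"
proof -
  have "(\<Sum>i\<in>{0, 1, 2}. (1 \<bullet> [p, u, w] ! i)\<^sup>2) \<le> (1::real^'n) \<bullet> 1"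
    by (rule bessel_inequality) (auto simp: frame_inner)
  then show ?thesis
    by (simp add: inner_commute) (simp add: inner_vec_def)
qed

lemma frobenius_bessel:
  defines "G \<equiv> outer_prod ones_perp_p ones_perp_uw"
  shows "2 * a\<^sup>2 + k\<^sup>2 + l\<^sup>2 + r\<^sup>2 \<le> A \<bullet> A"
    and "(A \<bullet> G)\<^sup>2 \<le> (A \<bullet> A - (2 * a\<^sup>2 + k\<^sup>2 + l\<^sup>2 + r\<^sup>2)) * (G \<bullet> G)"
proof -
  define I where "I = {0, 1, 2, 3, 4 :: nat}"
  define E where
    "E = (!) [outer_prod u u, outer_prod u w, outer_prod w u, outer_prod w w, outer_prod p p]"
  have orthonormal: "E i \<bullet> E j = (if i = j then 1 else 0)" if "i \<in> I" "j \<in> I" for i j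
    using that by (auto simp: I_def E_def inner_outer_prod_outer_prod frame_inner)
  have orthogonal: "E i \<bullet> G = 0" if "i \<in> I" for i
    using that by (auto simp: I_def E_def G_def inner_outer_prod_outer_prod ones_perp_p ones_perp_uw)
  have coefficients: "(\<Sum>i\<in>I. (A \<bullet> E i)\<^sup>2) = 2 * a\<^sup>2 + k\<^sup>2 + l\<^sup>2 + r\<^sup>2"
    by (simp add: I_def E_def inner_outer_prod A_u A_w p_A_p inner_add_right frame_inner)
  show "2 * a\<^sup>2 + k\<^sup>2 + l\<^sup>2 + r\<^sup>2 \<le> A \<bullet> A"
    using bessel_inequality[of I E A] orthonormal coefficients by (simp add: I_def)
  show "(A \<bullet> G)\<^sup>2 \<le> (A \<bullet> A - (2 * a\<^sup>2 + k\<^sup>2 + l\<^sup>2 + r\<^sup>2)) * (G \<bullet> G)"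
    using bessel_inequality_orthogonal[of I E G A] orthonormal orthogonal coefficients
    by (simp add: I_def)
qed

lemma ones_quadratic_form:
  "1 \<bullet> (A *v 1) = r * (p \<bullet> 1)\<^sup>2 + a * ((u \<bullet> 1)\<^sup>2 + (w \<bullet> 1)\<^sup>2) + (u \<bullet> 1) * (w \<bullet> 1) * (k + l)
     + A \<bullet> outer_prod ones_perp_p ones_perp_uw"
proof -
  have "p \<bullet> (A *v ones_perp_uw) = r * (p \<bullet> 1)"
    using dot_lmul_matrix[of p A ones_perp_uw] p_A
    by (simp add: ones_perp_uw_def inner_diff_right frame_inner)
  then have h: "1 \<bullet> (A *v ones_perp_uw) = r * (p \<bullet> 1)\<^sup>2 + A \<bullet> outer_prod ones_perp_p ones_perp_uw"
    by (simp add: inner_outer_prod ones_perp_p_def inner_diff_left power2_eq_square)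
  have "A *v 1 = A *v ((u \<bullet> 1) *\<^sub>R u + (w \<bullet> 1) *\<^sub>R w + ones_perp_uw)"
    by (simp add: ones_perp_uw_def)
  also have "\<dots> = (u \<bullet> 1) *\<^sub>R (A *v u) + (w \<bullet> 1) *\<^sub>R (A *v w) + A *v ones_perp_uw"
    by (simp add: matrix_vector_right_distrib matrix_vector_mult_scaleR)
  finally have "1 \<bullet> (A *v 1) = (u \<bullet> 1) * (1 \<bullet> (A *v u)) + (w \<bullet> 1) * (1 \<bullet> (A *v w))
      + 1 \<bullet> (A *v ones_perp_uw)"
    by (simp add: inner_add_right)
  moreover have "1 \<bullet> (A *v u) = a * (u \<bullet> 1) + k * (w \<bullet> 1)"
    and "1 \<bullet> (A *v w) = l * (u \<bullet> 1) + a * (w \<bullet> 1)"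
    by (simp_all add: A_u A_w inner_add_right inner_commute)
  ultimately show ?thesis
    using h by (simp add: power2_eq_square algebra_simps)
qed

lemma frobenius_inequality:
  assumes "\<forall>i j. 0 \<le> A $ i $ j" and "\<forall>i j. A $ i $ j \<le> 1" and "k * l \<le> 0"
  defines "m \<equiv> sqrt (a\<^sup>2 - k * l)" and "c \<equiv> (p \<bullet> 1)\<^sup>2" and "d \<equiv> (u \<bullet> 1)\<^sup>2 + (w \<bullet> 1)\<^sup>2"
    and "n \<equiv> real CARD('n)"
  shows "2 * m\<^sup>2 + r\<^sup>2 \<le> r * c + m * d + d\<^sup>2 / 16 + (n - c) * (n - d) / 4"
proof -
  define G where "G = outer_prod ones_perp_p ones_perp_uw"
  define S where "S = 2 * a\<^sup>2 + k\<^sup>2 + l\<^sup>2 + r\<^sup>2"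
  have "G \<bullet> G = (n - c) * (n - d)"
    by (simp add: G_def inner_outer_prod_outer_prod ones_perp_p ones_perp_uw n_def c_def d_def)
  moreover have "0 \<le> (n - c) * (n - d)"
    using sq_inner_ones_le zero_le_power2[of "p \<bullet> 1"] zero_le_power2[of "u \<bullet> 1"]
      zero_le_power2[of "w \<bullet> 1"] unfolding n_def c_def d_def by (intro mult_nonneg_nonneg) linarith+
  ultimately have "A \<bullet> G \<le> (A \<bullet> A - S) + (n - c) * (n - d) / 4"
    using frobenius_bessel by (intro sq_le_mult_imp_le_add_quarter) (auto simp: G_def S_def)
  moreover have "A \<bullet> A \<le> 1 \<bullet> (A *v 1)"
    using assms(1,2) by (rule inner_self_le_sum_entries)
  moreover have "(u \<bullet> 1) * (w \<bullet> 1) * (k + l) \<le> d\<^sup>2 / 16 + (k + l)\<^sup>2"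
    unfolding d_def by (rule mult_le_sum_squares_sq)
  moreover have "a * d \<le> m * d"
    using assms(3) by (auto simp: m_def d_def intro!: mult_right_mono real_le_rsqrt)
  moreover have "0 \<le> a\<^sup>2 - k * l"
    using assms(3) zero_le_power2[of a] by linarith
  then have "m\<^sup>2 = a\<^sup>2 - k * l"
    by (simp add: m_def)
  ultimately show ?thesis
    using ones_quadratic_form by (simp add: S_def G_def c_def d_def power2_eq_square algebra_simps)
qed

lemma quadratic_bound:
  assumes "\<forall>i j. 0 \<le> A $ i $ j" and "\<forall>i j. A $ i $ j \<le> 1" and "k * l \<le> 0" and "0 \<le> p"
    and "sqrt (a\<^sup>2 - k * l) \<le> r"
  shows "12 * (sqrt (a\<^sup>2 - k * l))\<^sup>2 - 3 * sqrt (a\<^sup>2 - k * l) * real CARD('n)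
    - (real CARD('n))\<^sup>2 \<le> 0"
proof -
  have "r \<le> (p \<bullet> 1)\<^sup>2"
    using assms(2,4) unit_p p_A by (rule nonneg_left_eigenvalue_le_sq_sum)
  moreover have "0 \<le> a\<^sup>2 - k * l"
    using assms(3) zero_le_power2[of a] by linarith
  ultimately show ?thesis
    using frobenius_inequality_imp_quadratic_bound[OF _ assms(5) _ _ sq_inner_ones_le
        frobenius_inequality[OF assms(1-3)]]
    by simp
qed

end

lemma rotation_frame_sgn:
  fixes A :: "real^'n^'n"
  assumes "x \<noteq> 0" and "y \<noteq> 0" and "x \<bullet> y = 0"
    and "p \<bullet> p = 1" and "p \<bullet> x = 0" and "p \<bullet> y = 0"
    and "A *v x = a *\<^sub>R x - b *\<^sub>R y" and "A *v y = b *\<^sub>R x + a *\<^sub>R y" and "p v* A = r *\<^sub>R p"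
  shows "rotation_frame A (sgn x) (sgn y) p a (- b * norm y / norm x) (b * norm x / norm y) r"
proof
  have "A *v sgn x = (1 / norm x) *\<^sub>R (a *\<^sub>R x - b *\<^sub>R y)"
    using assms(7) by (simp add: sgn_div_norm matrix_vector_mult_scaleR divide_inverse)
  also have "\<dots> = a *\<^sub>R sgn x + (- b * norm y / norm x) *\<^sub>R sgn y"
    using assms(2) by (simp add: sgn_div_norm algebra_simps divide_inverse)
  finally show "A *v sgn x = a *\<^sub>R sgn x + (- b * norm y / norm x) *\<^sub>R sgn y" .
  have "A *v sgn y = (1 / norm y) *\<^sub>R (b *\<^sub>R x + a *\<^sub>R y)"
    using assms(8) by (simp add: sgn_div_norm matrix_vector_mult_scaleR divide_inverse)
  also have "\<dots> = (b * norm x / norm y) *\<^sub>R sgn x + a *\<^sub>R sgn y"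
    using assms(1) by (simp add: sgn_div_norm algebra_simps divide_inverse)
  finally show "A *v sgn y = (b * norm x / norm y) *\<^sub>R sgn x + a *\<^sub>R sgn y" .
qed (use assms in \<open>simp_all add: sgn_div_norm dot_square_norm\<close>)

theorem corollary4:
  fixes A :: "real^'n^'n" and mu :: complex
  assumes nonneg: "\<forall>i j. 0 \<le> A $ i $ j"
    and maxnorm: "\<forall>i j. \<bar>A $ i $ j\<bar> \<le> 1"
    and eig: "complex_eigenvalue A mu"
    and nonreal: "Im mu \<noteq> 0"
  shows "cmod mu \<le> real CARD('n) / 2
    \<and> \<bar>Re mu\<bar> \<le> (3 + sqrt 57) / 24 * real CARD('n)"
proof -
  have le1: "\<forall>i j. A $ i $ j \<le> 1"
    using maxnorm by (meson abs_le_D1)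
  obtain x y where "x \<noteq> 0" "y \<noteq> 0" "x \<bullet> y = 0"
    and Ax: "A *v x = Re mu *\<^sub>R x - Im mu *\<^sub>R y" and Ay: "A *v y = Im mu *\<^sub>R x + Re mu *\<^sub>R y"
    using eig nonreal by (rule complex_eigenvalue_orthogonal_real_pair)
  obtain p r where "0 \<le> p" "p \<bullet> p = 1" and pA: "p v* A = r *\<^sub>R p" and "cmod mu \<le> r"
    using nonneg eig by (rule complex_eigenvalue_le_perron_root)
  have "p \<bullet> x = 0" "p \<bullet> y = 0"
    using pA Ax Ay nonreal by (rule left_eigenvector_orthogonal_rotation_pair)+
  define k l where "k = - Im mu * norm y / norm x" and "l = Im mu * norm x / norm y"
  have frame: "rotation_frame A (sgn x) (sgn y) p (Re mu) k l r"
    unfolding k_def l_def by (rule rotation_frame_sgn) fact+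
  have "k * l = - (Im mu)\<^sup>2"
    using \<open>x \<noteq> 0\<close> \<open>y \<noteq> 0\<close> by (simp add: k_def l_def power2_eq_square)
  then have "12 * (cmod mu)\<^sup>2 - 3 * cmod mu * real CARD('n) - (real CARD('n))\<^sup>2 \<le> 0"
    using rotation_frame.quadratic_bound[OF frame nonneg le1 _ \<open>0 \<le> p\<close>] \<open>cmod mu \<le> r\<close>
    by (simp add: cmod_def)
  then have bound: "cmod mu \<le> (3 + sqrt 57) / 24 * real CARD('n)"
    by (intro quadratic_le_zero_imp_le_root) simp_all
  have "(3 + sqrt 57) / 24 \<le> (1 / 2 :: real)"
    using real_sqrt_le_mono[of 57 "9\<^sup>2"] by simp
  then have "(3 + sqrt 57) / 24 * real CARD('n) \<le> real CARD('n) / 2"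
    using mult_right_mono[of "(3 + sqrt 57) / 24" "1 / 2" "real CARD('n)"] by simp
  then show ?thesis
    using bound abs_Re_le_cmod[of mu] by linarith
qed

end
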